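(* Let $C$ be a Pauli-Square-Root Clifford and $P$ a Pauli, both acting on the same $t$ qubits. Then there is a $t$-qubit Pauli $Q$ such that $$C(P)\,(I\otimes C)=C(Q)\,(I\otimes C)\,C(P),$$ where the first tensor factor is a single control qubit; moreover $Q$ either commutes or anticommutes with $C$, and $\mathrm{Supp}(Q)\subseteq\mathrm{Supp}(C)$.
   Context: Paulis are tensor products of $I,X,Y,Z$ times a phase in $\{\pm1,\pm i\}$; a Clifford is a unitary mapping Paulis to Paulis under conjugation. A Pauli-Square-Root Clifford (PSC) is a Clifford that is not a Pauli and whose square is a Pauli. For a unitary $U$ on $t$ qubits, $C(U)=|0\rangle\langle0|\otimes I+|1\rangle\langle1|\otimes U$ on $1+t$ qubits (control first). $\mathrm{Supp}(W)$ denotes the set of qubits on which an operator $W$ acts nontrivially. *)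

theory Defs
  imports "Jordan_Normal_Form.Schur_Decomposition"
begin

text \<open>Operators on t qubits are complex matrices of dimension 2^t x 2^t.
  Qubit 0 is the first (most significant) tensor factor.\<close>

definition kron :: "complex mat \<Rightarrow> complex mat \<Rightarrow> complex mat" where
  "kron A B = mat (dim_row A * dim_row B) (dim_col A * dim_col B)
     (\<lambda>(i,j). A $$ (i div dim_row B, j div dim_col B) * B $$ (i mod dim_row B, j mod dim_col B))"

definition pI :: "complex mat" where "pI = mat_of_rows_list 2 [[1,0],[0,1]]"
definition pX :: "complex mat" where "pX = mat_of_rows_list 2 [[0,1],[1,0]]"
definition pY :: "complex mat" where "pY = mat_of_rows_list 2 [[0,-\<i>],[\<i>,0]]"
definition pZ :: "complex mat" where "pZ = mat_of_rows_list 2 [[1,0],[0,-1]]"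

definition pauli :: "nat \<Rightarrow> complex mat \<Rightarrow> bool" where
  "pauli t P \<longleftrightarrow> (\<exists>c ps. c \<in> {1, -1, \<i>, -\<i>} \<and> length ps = t \<and> set ps \<subseteq> {pI, pX, pY, pZ}
       \<and> P = c \<cdot>\<^sub>m foldr kron ps (1\<^sub>m 1))"

definition unitary_op :: "nat \<Rightarrow> complex mat \<Rightarrow> bool" where
  "unitary_op t U \<longleftrightarrow> U \<in> carrier_mat (2^t) (2^t) \<and> U * mat_adjoint U = 1\<^sub>m (2^t)"

definition clifford :: "nat \<Rightarrow> complex mat \<Rightarrow> bool" where
  "clifford t U \<longleftrightarrow> unitary_op t U \<and> (\<forall>P. pauli t P \<longrightarrow> pauli t (U * P * mat_adjoint U))"

definition psc :: "nat \<Rightarrow> complex mat \<Rightarrow> bool" where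
  "psc t C \<longleftrightarrow> clifford t C \<and> \<not> pauli t C \<and> pauli t (C * C)"

text \<open>Controlled-U on 1+t qubits, control first: |0><0| (x) I + |1><1| (x) U.\<close>
definition ctrl :: "nat \<Rightarrow> complex mat \<Rightarrow> complex mat" where
  "ctrl t U = four_block_mat (1\<^sub>m (2^t)) (0\<^sub>m (2^t) (2^t)) (0\<^sub>m (2^t) (2^t)) U"

text \<open>I (x) U on 1+t qubits (identity on the control qubit).\<close>
definition idtensor :: "nat \<Rightarrow> complex mat \<Rightarrow> complex mat" where
  "idtensor t U = four_block_mat U (0\<^sub>m (2^t) (2^t)) (0\<^sub>m (2^t) (2^t)) U"

text \<open>Bit of basis index a corresponding to qubit j (qubit 0 most significant),
  and the index with that bit deleted.\<close>
definition qbit :: "nat \<Rightarrow> nat \<Rightarrow> nat \<Rightarrow> nat" where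
  "qbit t j a = (a div 2^(t - 1 - j)) mod 2"
definition qdel :: "nat \<Rightarrow> nat \<Rightarrow> nat \<Rightarrow> nat" where
  "qdel t j a = (a div 2^(t - j)) * 2^(t - 1 - j) + a mod 2^(t - 1 - j)"

text \<open>W acts trivially on qubit j iff W = I_j (x) W' for some operator W' on the other qubits.\<close>
definition acts_trivially :: "nat \<Rightarrow> complex mat \<Rightarrow> nat \<Rightarrow> bool" where
  "acts_trivially t W j \<longleftrightarrow> (\<exists>W' :: complex mat. W' \<in> carrier_mat (2^(t-1)) (2^(t-1)) \<and>
     (\<forall>a < 2^t. \<forall>b < 2^t. W $$ (a,b) =
        (if qbit t j a = qbit t j b then W' $$ (qdel t j a, qdel t j b) else 0)))"

definition Supp :: "nat \<Rightarrow> complex mat \<Rightarrow> nat set" where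
  "Supp t W = {j. j < t \<and> \<not> acts_trivially t W j}"

end

theory Submission
  imports Defs
begin

(* Take Q to be the group commutator P C P\<dagger> C\<dagger>. Then Q C P = P C, and comparing the two diagonal
   blocks this is exactly C(P)(I \<otimes> C) = C(Q)(I \<otimes> C)C(P). Q is a Pauli because the Clifford C
   conjugates the Pauli P\<dagger> to a Pauli. As S = C C is a Pauli, C\<dagger> P C = S\<dagger> (C P C\<dagger>) S, and two
   Paulis commute up to sign, so C\<dagger> P C = \<plusminus>C P C\<dagger>; hence C\<dagger> Q C = \<plusminus>(C P C\<dagger>) P\<dagger> = \<plusminus>Q\<dagger> = \<plusminus>Q.
   Finally, a Pauli is a tensor product of single-qubit unitaries, so conjugation by P preserves
   acting trivially on a qubit; thus Q = (P C P\<dagger>) C\<dagger> acts trivially wherever C does. *)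

section \<open>Matrix adjoints and unitaries\<close>

lemma dim_mat_adjoint [simp]:
  "dim_row (mat_adjoint A) = dim_col A" "dim_col (mat_adjoint A) = dim_row A"
  unfolding mat_adjoint_def by auto

lemma index_mat_adjoint [simp]:
  "i < dim_col A \<Longrightarrow> j < dim_row A \<Longrightarrow> mat_adjoint A $$ (i, j) = conjugate (A $$ (j, i))"
  unfolding mat_adjoint_def by (simp add: mat_of_rows_index)

lemma mat_adjoint_carrier_mat [simp]: "A \<in> carrier_mat n m \<Longrightarrow> mat_adjoint A \<in> carrier_mat m n"
  by (intro carrier_matI) auto

lemma mat_adjoint_mat_adjoint [simp]: "mat_adjoint (mat_adjoint A) = A"
  by (rule eq_matI) auto

lemma mat_adjoint_one [simp]: "mat_adjoint (1\<^sub>m n) = (1\<^sub>m n :: complex mat)"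
  by (rule eq_matI) auto

lemma mat_adjoint_smult: "mat_adjoint (c \<cdot>\<^sub>m A) = conjugate c \<cdot>\<^sub>m mat_adjoint A"
  by (rule eq_matI) (auto simp: conjugate_dist_mul)

lemma mat_adjoint_mult:
  fixes A B :: "'a :: conjugatable_field mat"
  assumes "A \<in> carrier_mat n m" "B \<in> carrier_mat m k"
  shows "mat_adjoint (A * B) = mat_adjoint B * mat_adjoint A"
proof (rule eq_matI)
  fix i j assume "i < dim_row (mat_adjoint B * mat_adjoint A)" "j < dim_col (mat_adjoint B * mat_adjoint A)"
  with assms show "mat_adjoint (A * B) $$ (i, j) = (mat_adjoint B * mat_adjoint A) $$ (i, j)"
    by (auto simp: scalar_prod_def sum_conjugate conjugate_dist_mul mult.commute intro!: sum.cong)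
qed (use assms in auto)

lemma smult_smult_mat: "a \<cdot>\<^sub>m (b \<cdot>\<^sub>m A) = (a * b) \<cdot>\<^sub>m (A :: 'a :: semigroup_mult mat)"
  by (rule eq_matI) (auto simp: mult.assoc)

lemma one_smult_mat [simp]: "1 \<cdot>\<^sub>m A = (A :: 'a :: monoid_mult mat)"
  by (rule eq_matI) auto

lemma minus_one_smult_mat: "(-1) \<cdot>\<^sub>m A = - (A :: 'a :: ring_1 mat)"
  by (rule eq_matI) auto

lemma smult_mult_smult_mat:
  assumes "A \<in> carrier_mat n m" "B \<in> carrier_mat m k"
  shows "(a \<cdot>\<^sub>m A) * (b \<cdot>\<^sub>m B) = (a * b) \<cdot>\<^sub>m (A * B :: 'a :: comm_semiring_0 mat)"
  by (rule eq_matI) (use assms in \<open>auto simp: scalar_prod_def sum_distrib_left ac_simps intro!: sum.cong\<close>)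

lemma sign_smult_cases:
  "s \<in> {1, -1} \<Longrightarrow> A = s \<cdot>\<^sub>m B \<Longrightarrow> A = B \<or> A = - (B :: 'a :: ring_1 mat)"
  by (auto simp: minus_one_smult_mat)

lemma unitary_op_mat_adjoint_mult:
  assumes "unitary_op t U"
  shows "mat_adjoint U * U = 1\<^sub>m (2^t)"
  using assms mat_mult_left_right_inverse[of U "2^t" "mat_adjoint U"] unfolding unitary_op_def by auto

lemma unitary_op_cancel:
  assumes "unitary_op t U" "X \<in> carrier_mat (2^t) m"
  shows "U * (mat_adjoint U * X) = X" "mat_adjoint U * (U * X) = X"
proof -
  have "U \<in> carrier_mat (2^t) (2^t)" "U * mat_adjoint U = 1\<^sub>m (2^t)"
    using assms(1) by (auto simp: unitary_op_def)
  moreover have "mat_adjoint U * U = 1\<^sub>m (2^t)"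
    using assms(1) by (rule unitary_op_mat_adjoint_mult)
  ultimately show "U * (mat_adjoint U * X) = X" "mat_adjoint U * (U * X) = X"
    using assms(2) by (simp_all flip: assoc_mult_mat[of _ "2^t" "2^t" _ "2^t" _ m])
qed

section \<open>Single-qubit Pauli matrices\<close>

definition pauli_phases :: "complex set" where
  "pauli_phases = {1, -1, \<i>, -\<i>}"

lemma pauli_phases_mult: "a \<in> pauli_phases \<Longrightarrow> b \<in> pauli_phases \<Longrightarrow> a * b \<in> pauli_phases"
  by (auto simp: pauli_phases_def)

lemma pauli_phases_cnj: "a \<in> pauli_phases \<Longrightarrow> cnj a \<in> pauli_phases"
  by (auto simp: pauli_phases_def)

lemma pauli_phases_mult_cnj: "a \<in> pauli_phases \<Longrightarrow> a * cnj a = 1"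
  by (auto simp: pauli_phases_def)

lemma pauli_phases_cnj_sign: "a \<in> pauli_phases \<Longrightarrow> \<exists>s\<in>{1, -1}. cnj a = s * a"
  by (auto simp: pauli_phases_def)

definition mat2 :: "'a \<Rightarrow> 'a \<Rightarrow> 'a \<Rightarrow> 'a \<Rightarrow> 'a mat" where
  "mat2 a b c d = mat_of_rows_list 2 [[a, b], [c, d]]"

lemma mat2_carrier_mat [simp]: "mat2 a b c d \<in> carrier_mat 2 2"
  by (auto simp: mat2_def mat_of_rows_list_def)

lemma dim_mat2 [simp]: "dim_row (mat2 a b c d) = 2" "dim_col (mat2 a b c d) = 2"
  by (auto simp: mat2_def mat_of_rows_list_def)

lemma index_mat2:
  "mat2 a b c d $$ (0, 0) = a" "mat2 a b c d $$ (0, Suc 0) = b"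
  "mat2 a b c d $$ (Suc 0, 0) = c" "mat2 a b c d $$ (Suc 0, Suc 0) = d"
  by (auto simp: mat2_def mat_of_rows_list_def)

lemma mat2_eq_iff: "mat2 a b c d = mat2 a' b' c' d' \<longleftrightarrow> a = a' \<and> b = b' \<and> c = c' \<and> d = d'"
  by (metis index_mat2)

lemma mat2_mult:
  "mat2 a b c d * mat2 e f g h = mat2 (a*e + b*g) (a*f + b*h) (c*e + d*g) (c*f + d*h)"
  by (rule eq_matI)
     (auto simp: scalar_prod_def index_mat2 numeral_2_eq_2 less_Suc_eq atLeast0_lessThan_Suc add.commute)

lemma smult_mat2: "x \<cdot>\<^sub>m mat2 a b c d = mat2 (x*a) (x*b) (x*c) (x*d)"
  by (rule eq_matI) (auto simp: numeral_2_eq_2 less_Suc_eq index_mat2)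

lemma mat_adjoint_mat2: "mat_adjoint (mat2 a b c d) = mat2 (cnj a) (cnj c) (cnj b) (cnj d)"
  by (rule eq_matI) (auto simp: numeral_2_eq_2 less_Suc_eq index_mat2)

lemma one_mat2: "1\<^sub>m 2 = mat2 1 0 0 1"
  by (rule eq_matI) (auto simp: numeral_2_eq_2 less_Suc_eq index_mat2)

definition single_paulis :: "complex mat set" where
  "single_paulis = {pI, pX, pY, pZ}"

lemma single_paulis_mat2:
  "single_paulis = {mat2 1 0 0 1, mat2 0 1 1 0, mat2 0 (-\<i>) \<i> 0, mat2 1 0 0 (-1)}"
  by (simp add: single_paulis_def pI_def pX_def pY_def pZ_def mat2_def)

lemma single_pauli_carrier_mat: "p \<in> single_paulis \<Longrightarrow> p \<in> carrier_mat 2 2"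
  by (auto simp: single_paulis_mat2)

lemma single_paulis_subset_carrier_mat: "single_paulis \<subseteq> carrier_mat 2 2"
  using single_pauli_carrier_mat by blast

lemma single_pauli_mat_adjoint: "p \<in> single_paulis \<Longrightarrow> mat_adjoint p = p"
  by (auto simp: single_paulis_mat2 mat_adjoint_mat2)

lemma single_pauli_square: "p \<in> single_paulis \<Longrightarrow> p * p = 1\<^sub>m 2"
  by (auto simp: single_paulis_mat2 mat2_mult one_mat2)

lemma single_pauli_mult:
  "p \<in> single_paulis \<Longrightarrow> q \<in> single_paulis \<Longrightarrow> \<exists>c\<in>pauli_phases. \<exists>r\<in>single_paulis. p * q = c \<cdot>\<^sub>m r"
  unfolding single_paulis_mat2 pauli_phases_def
  by (elim insertE emptyE) (simp_all add: mat2_mult smult_mat2 mat2_eq_iff)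

lemma single_paulis_commute_or_anticommute:
  "p \<in> single_paulis \<Longrightarrow> q \<in> single_paulis \<Longrightarrow> \<exists>s\<in>{1, -1}. p * q = s \<cdot>\<^sub>m (q * p)"
  unfolding single_paulis_mat2
  by (elim insertE emptyE) (simp_all add: mat2_mult smult_mat2 mat2_eq_iff)

section \<open>Kronecker products\<close>

lemma sum_lessThan_mult_split:
  fixes f :: "nat \<Rightarrow> 'a :: comm_monoid_add"
  shows "(\<Sum>c<n * m. f c) = (\<Sum>x<n. \<Sum>y<m. f (x * m + y))"
proof -
  have "(\<Sum>c<n * m. f c) = (\<Sum>x<n. sum f {x * m..<x * m + m})"
    by (rule sum.nat_group[symmetric])
  also have "\<dots> = (\<Sum>x<n. \<Sum>y<m. f (x * m + y))"
  proof (rule sum.cong[OF refl])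
    fix x
    show "sum f {x * m..<x * m + m} = (\<Sum>y<m. f (x * m + y))"
      using sum.shift_bounds_nat_ivl[of f 0 "x * m" m] by (simp add: add.commute atLeast0LessThan)
  qed
  finally show ?thesis .
qed

lemma mod_less_of_less_mult: "(i::nat) < a * b \<Longrightarrow> i mod b < b"
  by (metis mod_less_divisor mult_zero_right not_gr_zero not_less_zero)

lemma mult_add_less_mult: "(x::nat) < n \<Longrightarrow> r < B \<Longrightarrow> x * B + r < n * B"
proof -
  assume "x < n" "r < B"
  then have "x * B + r < (x + 1) * B" by simp
  also have "\<dots> \<le> n * B" using \<open>x < n\<close> by (intro mult_le_mono1) simp
  finally show ?thesis .
qed

lemma dim_kron [simp]:
  "dim_row (kron A B) = dim_row A * dim_row B" "dim_col (kron A B) = dim_col A * dim_col B"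
  unfolding kron_def by auto

lemma kron_carrier_mat:
  "A \<in> carrier_mat n n' \<Longrightarrow> B \<in> carrier_mat m m' \<Longrightarrow> kron A B \<in> carrier_mat (n * m) (n' * m')"
  by (intro carrier_matI) auto

lemma index_kron:
  "i < dim_row A * dim_row B \<Longrightarrow> j < dim_col A * dim_col B \<Longrightarrow>
   kron A B $$ (i, j) = A $$ (i div dim_row B, j div dim_col B) * B $$ (i mod dim_row B, j mod dim_col B)"
  unfolding kron_def by simp

lemma kron_mult_kron:
  assumes A: "A \<in> carrier_mat n k" and C: "C \<in> carrier_mat k n'"
    and B: "B \<in> carrier_mat m l" and D: "D \<in> carrier_mat l m'"
  shows "kron A B * kron C D = kron (A * C) (B * D)"
proof (rule eq_matI)
  fix i j assume "i < dim_row (kron (A * C) (B * D))" "j < dim_col (kron (A * C) (B * D))"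
  then have i: "i < n * m" and j: "j < n' * m'" using A B C D by auto
  have "(kron A B * kron C D) $$ (i, j) = (\<Sum>c<k * l. kron A B $$ (i, c) * kron C D $$ (c, j))"
    using i j A B C D by (simp add: scalar_prod_def atLeast0LessThan)
  also have "\<dots> = (\<Sum>x<k. \<Sum>y<l. kron A B $$ (i, x * l + y) * kron C D $$ (x * l + y, j))"
    by (rule sum_lessThan_mult_split)
  also have "\<dots> = (\<Sum>x<k. \<Sum>y<l. (A $$ (i div m, x) * C $$ (x, j div m')) *
                                   (B $$ (i mod m, y) * D $$ (y, j mod m')))"
  proof (intro sum.cong refl)
    fix x y assume "x \<in> {..<k}" and y: "y \<in> {..<l}"
    then have xy: "x * l + y < k * l" by (simp add: mult_add_less_mult)
    show "kron A B $$ (i, x * l + y) * kron C D $$ (x * l + y, j) =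
          (A $$ (i div m, x) * C $$ (x, j div m')) * (B $$ (i mod m, y) * D $$ (y, j mod m'))"
      using i j xy y A B C D by (simp add: index_kron)
  qed
  also have "\<dots> = (\<Sum>x<k. A $$ (i div m, x) * C $$ (x, j div m')) *
                  (\<Sum>y<l. B $$ (i mod m, y) * D $$ (y, j mod m'))"
    by (simp add: sum_product)
  also have "\<dots> = kron (A * C) (B * D) $$ (i, j)"
    using i j A B C D
    by (simp add: index_kron scalar_prod_def atLeast0LessThan less_mult_imp_div_less mod_less_of_less_mult)
  finally show "(kron A B * kron C D) $$ (i, j) = kron (A * C) (B * D) $$ (i, j)" .
qed (use A B C D in auto)

lemma kron_smult_left: "kron (c \<cdot>\<^sub>m A) B = c \<cdot>\<^sub>m kron A B"
  by (rule eq_matI) (auto simp: index_kron less_mult_imp_div_less mod_less_of_less_mult)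

lemma kron_smult_right: "kron A (c \<cdot>\<^sub>m B) = c \<cdot>\<^sub>m kron A B"
  by (rule eq_matI) (auto simp: index_kron less_mult_imp_div_less mod_less_of_less_mult)

lemma mat_adjoint_kron: "mat_adjoint (kron A B) = kron (mat_adjoint A) (mat_adjoint B)"
  by (rule eq_matI) (auto simp: index_kron less_mult_imp_div_less mod_less_of_less_mult)

lemma kron_one_one: "kron (1\<^sub>m n) (1\<^sub>m m) = 1\<^sub>m (n * m)"
proof (rule eq_matI)
  fix i j assume "i < dim_row (1\<^sub>m (n * m) :: complex mat)" "j < dim_col (1\<^sub>m (n * m) :: complex mat)"
  then have i: "i < n * m" and j: "j < n * m" by auto
  have "(i div m = j div m \<and> i mod m = j mod m) \<longleftrightarrow> i = j"
    by (metis div_mult_mod_eq)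
  then show "kron (1\<^sub>m n) (1\<^sub>m m) $$ (i, j) = 1\<^sub>m (n * m) $$ (i, j)"
    using i j by (auto simp: index_kron less_mult_imp_div_less mod_less_of_less_mult)
qed auto

lemma kron_one_1_left [simp]: "kron (1\<^sub>m 1) B = B"
  by (rule eq_matI) (auto simp: index_kron)

lemma kron_assoc: "kron (kron A B) C = kron A (kron B C)"
proof (rule eq_matI)
  fix i j assume "i < dim_row (kron A (kron B C))" "j < dim_col (kron A (kron B C))"
  then have i: "i < dim_row A * (dim_row B * dim_row C)" and j: "j < dim_col A * (dim_col B * dim_col C)"
    by auto
  have div_div: "x div c div b = x div (b * c)" for x b c :: nat
    by (metis div_mult2_eq mult.commute)
  have div_mod: "x div c mod b = x mod (b * c) div c" for x b c :: nat
  proof -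
    have "x mod (b * c) = c * (x div c mod b) + x mod c"
      using mod_mult2_eq[of x c b] by (simp add: mult.commute)
    then show ?thesis by (cases "c = 0") auto
  qed
  have mod_mod: "x mod (b * c) mod c = x mod c" for x b c :: nat
    by (metis mod_mod_cancel dvd_triv_right)
  show "kron (kron A B) C $$ (i, j) = kron A (kron B C) $$ (i, j)"
    using i j mod_less_of_less_mult[OF i] mod_less_of_less_mult[OF j]
    by (simp add: index_kron less_mult_imp_div_less mod_less_of_less_mult div_div div_mod mod_mod mult.assoc)
qed auto

definition kron_list :: "complex mat list \<Rightarrow> complex mat" where
  "kron_list ps = foldr kron ps (1\<^sub>m 1)"

lemma kron_list_simps [simp]:
  "kron_list [] = 1\<^sub>m 1" "kron_list (p # ps) = kron p (kron_list ps)"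
  by (simp_all add: kron_list_def)

lemma kron_list_append: "kron_list (ps @ qs) = kron (kron_list ps) (kron_list qs)"
  by (induction ps) (simp_all add: kron_assoc kron_one_1_left[unfolded One_nat_def])

lemma kron_list_carrier_mat:
  "set ps \<subseteq> carrier_mat 2 2 \<Longrightarrow> kron_list ps \<in> carrier_mat (2^length ps) (2^length ps)"
proof (induction ps)
  case (Cons p ps)
  then show ?case using kron_carrier_mat[of p 2 2 "kron_list ps"] by simp
qed simp

lemma kron_list_Cons_mult_Cons:
  assumes "p \<in> carrier_mat 2 2" "q \<in> carrier_mat 2 2"
    and "set ps \<subseteq> carrier_mat 2 2" "set qs \<subseteq> carrier_mat 2 2" "length ps = length qs"
  shows "kron_list (p # ps) * kron_list (q # qs) = kron (p * q) (kron_list ps * kron_list qs)"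
  using assms kron_list_carrier_mat[of ps] kron_list_carrier_mat[of qs]
  by (simp add: kron_mult_kron)

section \<open>The Pauli group\<close>

lemma mat_adjoint_kron_list_single_paulis:
  "set ps \<subseteq> single_paulis \<Longrightarrow> mat_adjoint (kron_list ps) = kron_list ps"
  by (induction ps) (auto simp: mat_adjoint_kron single_pauli_mat_adjoint)

lemma kron_list_single_paulis_square:
  "set ps \<subseteq> single_paulis \<Longrightarrow> kron_list ps * kron_list ps = 1\<^sub>m (2^length ps)"
proof (induction ps)
  case (Cons p ps)
  then have "kron_list (p # ps) * kron_list (p # ps) = kron (p * p) (kron_list ps * kron_list ps)"
    using single_paulis_subset_carrier_mat by (intro kron_list_Cons_mult_Cons) auto
  with Cons show ?case by (simp add: single_pauli_square kron_one_one)
qed simp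

lemma kron_list_single_paulis_mult:
  assumes "set ps \<subseteq> single_paulis" "set qs \<subseteq> single_paulis" "length ps = length qs"
  shows "\<exists>c\<in>pauli_phases. \<exists>rs. length rs = length ps \<and> set rs \<subseteq> single_paulis \<and>
           kron_list ps * kron_list qs = c \<cdot>\<^sub>m kron_list rs"
  using assms
proof (induction ps arbitrary: qs)
  case Nil
  then show ?case by (intro bexI[of _ 1] exI[of _ "[]"]) (auto simp: pauli_phases_def)
next
  case (Cons p ps)
  then obtain q qs' where qs: "qs = q # qs'" and prems: "p \<in> single_paulis" "q \<in> single_paulis"
      "set ps \<subseteq> single_paulis" "set qs' \<subseteq> single_paulis" "length ps = length qs'"
    by (cases qs) auto
  then obtain c rs where rs: "c \<in> pauli_phases" "length rs = length ps" "set rs \<subseteq> single_paulis"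
      "kron_list ps * kron_list qs' = c \<cdot>\<^sub>m kron_list rs"
    using Cons.IH by blast
  obtain c0 r where r: "c0 \<in> pauli_phases" "r \<in> single_paulis" "p * q = c0 \<cdot>\<^sub>m r"
    using single_pauli_mult prems by blast
  have "kron_list (p # ps) * kron_list qs = kron (p * q) (kron_list ps * kron_list qs')"
    unfolding qs using prems single_paulis_subset_carrier_mat by (intro kron_list_Cons_mult_Cons) auto
  also have "\<dots> = (c0 * c) \<cdot>\<^sub>m kron_list (r # rs)"
    by (simp add: rs r kron_smult_left kron_smult_right smult_smult_mat mult.commute)
  finally show ?case
    using rs r pauli_phases_mult by (intro bexI[of _ "c0 * c"] exI[of _ "r # rs"]) auto
qed

lemma kron_list_single_paulis_commute_or_anticommute:
  assumes "set ps \<subseteq> single_paulis" "set qs \<subseteq> single_paulis" "length ps = length qs"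
  shows "\<exists>s\<in>{1, -1}. kron_list ps * kron_list qs = s \<cdot>\<^sub>m (kron_list qs * kron_list ps)"
  using assms
proof (induction ps arbitrary: qs)
  case Nil
  then show ?case by auto
next
  case (Cons p ps)
  then obtain q qs' where qs: "qs = q # qs'" and prems: "p \<in> single_paulis" "q \<in> single_paulis"
      "set ps \<subseteq> single_paulis" "set qs' \<subseteq> single_paulis" "length ps = length qs'"
    by (cases qs) auto
  then obtain s where s: "s \<in> {1, -1}"
      "kron_list ps * kron_list qs' = s \<cdot>\<^sub>m (kron_list qs' * kron_list ps)"
    using Cons.IH by blast
  obtain s0 where s0: "s0 \<in> {1, -1}" "p * q = s0 \<cdot>\<^sub>m (q * p)"
    using single_paulis_commute_or_anticommute prems by blast
  have "kron_list (p # ps) * kron_list qs = kron (p * q) (kron_list ps * kron_list qs')"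
    unfolding qs using prems single_paulis_subset_carrier_mat by (intro kron_list_Cons_mult_Cons) auto
  also have "\<dots> = (s0 * s) \<cdot>\<^sub>m kron (q * p) (kron_list qs' * kron_list ps)"
    by (simp add: s s0 kron_smult_left kron_smult_right smult_smult_mat mult.commute)
  also have "kron (q * p) (kron_list qs' * kron_list ps) = kron_list qs * kron_list (p # ps)"
    unfolding qs using prems single_paulis_subset_carrier_mat
    by (intro kron_list_Cons_mult_Cons[symmetric]) auto
  finally have "kron_list (p # ps) * kron_list qs = (s0 * s) \<cdot>\<^sub>m (kron_list qs * kron_list (p # ps))" .
  moreover have "s0 * s \<in> {1, -1}" using s(1) s0(1) by auto
  ultimately show ?case by blast
qed

lemma pauli_iff:
  "pauli t P \<longleftrightarrow> (\<exists>c ps. c \<in> pauli_phases \<and> length ps = t \<and> set ps \<subseteq> single_paulis \<and>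
                         P = c \<cdot>\<^sub>m kron_list ps)"
  by (simp add: pauli_def pauli_phases_def single_paulis_def kron_list_def)

lemma pauliE:
  assumes "pauli t P"
  obtains c ps where "c \<in> pauli_phases" "length ps = t" "set ps \<subseteq> single_paulis"
    "kron_list ps \<in> carrier_mat (2^t) (2^t)" "P = c \<cdot>\<^sub>m kron_list ps"
proof -
  obtain c ps where "c \<in> pauli_phases" "length ps = t" "set ps \<subseteq> single_paulis" "P = c \<cdot>\<^sub>m kron_list ps"
    using assms pauli_iff by auto
  moreover from this(2,3) have "kron_list ps \<in> carrier_mat (2^t) (2^t)"
    using kron_list_carrier_mat[of ps] single_paulis_subset_carrier_mat by auto
  ultimately show ?thesis using that by blast
qed

lemma pauli_carrier_mat: "pauli t P \<Longrightarrow> P \<in> carrier_mat (2^t) (2^t)"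
  by (elim pauliE) simp

lemma pauli_mult:
  assumes "pauli t P" "pauli t Q"
  shows "pauli t (P * Q)"
proof -
  obtain c ps where P: "c \<in> pauli_phases" "length ps = t" "set ps \<subseteq> single_paulis"
      "kron_list ps \<in> carrier_mat (2^t) (2^t)" "P = c \<cdot>\<^sub>m kron_list ps"
    using assms(1) by (rule pauliE)
  obtain d qs where Q: "d \<in> pauli_phases" "length qs = t" "set qs \<subseteq> single_paulis"
      "kron_list qs \<in> carrier_mat (2^t) (2^t)" "Q = d \<cdot>\<^sub>m kron_list qs"
    using assms(2) by (rule pauliE)
  have "length ps = length qs" using P(2) Q(2) by simp
  from kron_list_single_paulis_mult[OF P(3) Q(3) this]
  obtain e rs where R: "e \<in> pauli_phases" "length rs = length ps" "set rs \<subseteq> single_paulis"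
      "kron_list ps * kron_list qs = e \<cdot>\<^sub>m kron_list rs"
    by blast
  have "P * Q = (c * d * e) \<cdot>\<^sub>m kron_list rs"
    using smult_mult_smult_mat[OF P(4) Q(4)] by (simp add: P(5) Q(5) R(4) smult_smult_mat)
  moreover have "c * d * e \<in> pauli_phases"
    using P(1) Q(1) R(1) by (intro pauli_phases_mult)
  moreover have "length rs = t"
    using P(2) R(2) by simp
  ultimately show ?thesis
    unfolding pauli_iff using R(3) by blast
qed

lemma pauli_mat_adjoint:
  assumes "pauli t P"
  shows "pauli t (mat_adjoint P)" and "\<exists>s\<in>{1, -1}. mat_adjoint P = s \<cdot>\<^sub>m P"
    and "P * mat_adjoint P = 1\<^sub>m (2^t)"
proof -
  obtain c ps where P: "c \<in> pauli_phases" "length ps = t" "set ps \<subseteq> single_paulis"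
      "kron_list ps \<in> carrier_mat (2^t) (2^t)" "P = c \<cdot>\<^sub>m kron_list ps"
    using assms by (rule pauliE)
  have adj: "mat_adjoint P = cnj c \<cdot>\<^sub>m kron_list ps"
    using P(3,5) by (simp add: mat_adjoint_smult mat_adjoint_kron_list_single_paulis)
  show "pauli t (mat_adjoint P)"
    unfolding pauli_iff adj using P(2,3) pauli_phases_cnj[OF P(1)] by blast
  obtain s where s: "s \<in> {1, -1}" "cnj c = s * c"
    using pauli_phases_cnj_sign[OF P(1)] by blast
  have "mat_adjoint P = s \<cdot>\<^sub>m P"
    unfolding adj s(2) by (simp add: P(5) smult_smult_mat)
  then show "\<exists>s\<in>{1, -1}. mat_adjoint P = s \<cdot>\<^sub>m P"
    using s(1) by blast
  show "P * mat_adjoint P = 1\<^sub>m (2^t)"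
    using smult_mult_smult_mat[OF P(4) P(4), of c "cnj c"] kron_list_single_paulis_square[OF P(3)]
    unfolding adj by (simp add: P(2) P(5) pauli_phases_mult_cnj[OF P(1)])
qed

lemma pauli_unitary_op: "pauli t P \<Longrightarrow> unitary_op t P"
  unfolding unitary_op_def using pauli_carrier_mat pauli_mat_adjoint(3) by blast

lemma paulis_commute_or_anticommute:
  assumes "pauli t P" "pauli t Q"
  shows "\<exists>s\<in>{1, -1}. P * Q = s \<cdot>\<^sub>m (Q * P)"
proof -
  obtain c ps where P: "c \<in> pauli_phases" "length ps = t" "set ps \<subseteq> single_paulis"
      "kron_list ps \<in> carrier_mat (2^t) (2^t)" "P = c \<cdot>\<^sub>m kron_list ps"
    using assms(1) by (rule pauliE)
  obtain d qs where Q: "d \<in> pauli_phases" "length qs = t" "set qs \<subseteq> single_paulis"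
      "kron_list qs \<in> carrier_mat (2^t) (2^t)" "Q = d \<cdot>\<^sub>m kron_list qs"
    using assms(2) by (rule pauliE)
  have "length ps = length qs" using P(2) Q(2) by simp
  from kron_list_single_paulis_commute_or_anticommute[OF P(3) Q(3) this]
  obtain s where s: "s \<in> {1, -1}" "kron_list ps * kron_list qs = s \<cdot>\<^sub>m (kron_list qs * kron_list ps)"
    by blast
  have "P * Q = (c * d) \<cdot>\<^sub>m (kron_list ps * kron_list qs)"
    using smult_mult_smult_mat[OF P(4) Q(4)] by (simp add: P(5) Q(5))
  also have "\<dots> = s \<cdot>\<^sub>m ((d * c) \<cdot>\<^sub>m (kron_list qs * kron_list ps))"
    by (simp add: s(2) smult_smult_mat mult.commute)
  also have "(d * c) \<cdot>\<^sub>m (kron_list qs * kron_list ps) = Q * P"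
    using smult_mult_smult_mat[OF Q(4) P(4)] by (simp add: P(5) Q(5))
  finally show ?thesis using s(1) by blast
qed

section \<open>Splitting off one qubit\<close>

lemma div_mod_bit_decomp: "(a::nat) = (a div (2 * B) * 2 + a div B mod 2) * B + a mod B"
  by (metis div_mult2_eq div_mult_mod_eq mult.commute)

lemma power2_split_at:
  assumes "j < t"
  shows "(2::nat)^t = 2^j * 2 * 2^(t-1-j)" "(2::nat)^(t-1) = 2^j * 2^(t-1-j)"
    "(2::nat)^(t-j) = 2 * 2^(t-1-j)"
proof -
  have "t = j + Suc (t-1-j)" "t - 1 = j + (t-1-j)" "t - j = Suc (t-1-j)" using assms by arith+
  then show "(2::nat)^t = 2^j * 2 * 2^(t-1-j)" "(2::nat)^(t-1) = 2^j * 2^(t-1-j)"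
    "(2::nat)^(t-j) = 2 * 2^(t-1-j)"
    by (metis power_add power_Suc mult.assoc)+
qed

(* Inverse to a \<mapsto> (qbit t j a, qdel t j a): inserts the bit v at the position of qubit j. *)
definition qins :: "nat \<Rightarrow> nat \<Rightarrow> nat \<Rightarrow> nat \<Rightarrow> nat" where
  "qins t j v d = d div 2^(t-1-j) * (2 * 2^(t-1-j)) + v * 2^(t-1-j) + d mod 2^(t-1-j)"

lemma qbit_less_2: "qbit t j a < 2"
  by (simp add: qbit_def)

context
  fixes t j :: nat and B :: nat
  assumes j: "j < t"
  defines "B \<equiv> 2^(t-1-j)"
begin

lemma qbit_eq: "qbit t j a = a div B mod 2"
  by (simp add: qbit_def B_def)

lemma qdel_eq: "qdel t j a = a div (2 * B) * B + a mod B"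
  using power2_split_at(3)[OF j] by (simp add: qdel_def B_def)

lemma qins_eq: "qins t j v d = (d div B * 2 + v) * B + d mod B"
  by (simp add: qins_def B_def algebra_simps)

lemma qdel_less: "a < 2^t \<Longrightarrow> qdel t j a < 2^(t-1)"
  using power2_split_at[OF j] mult_add_less_mult[of "a div (2 * B)" "2^j" "a mod B" B]
  by (simp add: qdel_eq B_def less_mult_imp_div_less mult.assoc)

lemma qins_less: "v < 2 \<Longrightarrow> d < 2^(t-1) \<Longrightarrow> qins t j v d < 2^t"
  using power2_split_at[OF j] mult_add_less_mult[of "d div B" "2^j" v 2]
    mult_add_less_mult[of "d div B * 2 + v" "2^j * 2" "d mod B" B]
  by (simp add: qins_eq B_def less_mult_imp_div_less)

lemma qbit_qins: "v < 2 \<Longrightarrow> qbit t j (qins t j v d) = v"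
  by (simp add: qbit_eq qins_eq B_def)

lemma qdel_qins:
  assumes "v < 2"
  shows "qdel t j (qins t j v d) = d"
proof -
  have "qins t j v d div B = d div B * 2 + v" "qins t j v d mod B = d mod B"
    by (simp_all add: qins_eq B_def)
  moreover have "x div (2 * B) = x div B div 2" for x
    by (simp add: div_mult2_eq mult.commute)
  ultimately show ?thesis
    using assms by (simp add: qdel_eq)
qed

lemma qins_qbit_qdel: "qins t j (qbit t j a) (qdel t j a) = a"
  using div_mod_bit_decomp[of a B] by (simp add: qins_eq qbit_eq qdel_eq B_def)

end

lemma sum_qubit_split:
  assumes "j < t"
  shows "(\<Sum>a<2^t. f a) = (\<Sum>v<2. \<Sum>d<2^(t-1). f (qins t j v d))"
proof -
  have "bij_betw (\<lambda>(v, d). qins t j v d) ({..<2} \<times> {..<2^(t-1)}) {..<2^t}"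
    by (rule bij_betwI[where g = "\<lambda>a. (qbit t j a, qdel t j a)"])
       (use qins_less[OF assms] qdel_less[OF assms] qbit_qins[OF assms] qdel_qins[OF assms] in
        \<open>auto simp: qbit_less_2 qins_qbit_qdel[OF assms]\<close>)
  then have "(\<Sum>a<2^t. f a) = (\<Sum>x\<in>{..<2} \<times> {..<2^(t-1)}. f ((\<lambda>(v, d). qins t j v d) x))"
    by (rule sum.reindex_bij_betw[symmetric])
  also have "\<dots> = (\<Sum>v<2. \<Sum>d<2^(t-1). f (qins t j v d))"
    by (simp add: sum.cartesian_product split_def)
  finally show ?thesis .
qed

(* The operator acting as m on qubit j and as W on the other t - 1 qubits. *)
definition qubit_tensor :: "nat \<Rightarrow> nat \<Rightarrow> complex mat \<Rightarrow> complex mat \<Rightarrow> complex mat" where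
  "qubit_tensor t j m W =
     mat (2^t) (2^t) (\<lambda>(a, b). m $$ (qbit t j a, qbit t j b) * W $$ (qdel t j a, qdel t j b))"

lemma qubit_tensor_carrier_mat [simp]: "qubit_tensor t j m W \<in> carrier_mat (2^t) (2^t)"
  unfolding qubit_tensor_def by simp

lemma dim_qubit_tensor [simp]:
  "dim_row (qubit_tensor t j m W) = 2^t" "dim_col (qubit_tensor t j m W) = 2^t"
  unfolding qubit_tensor_def by simp_all

lemma index_qubit_tensor:
  "a < 2^t \<Longrightarrow> b < 2^t \<Longrightarrow>
   qubit_tensor t j m W $$ (a, b) = m $$ (qbit t j a, qbit t j b) * W $$ (qdel t j a, qdel t j b)"
  unfolding qubit_tensor_def by simp

lemma qubit_tensor_mult:
  assumes j: "j < t" and m: "m \<in> carrier_mat 2 2" "m' \<in> carrier_mat 2 2"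
    and W: "W \<in> carrier_mat (2^(t-1)) (2^(t-1))" "W' \<in> carrier_mat (2^(t-1)) (2^(t-1))"
  shows "qubit_tensor t j m W * qubit_tensor t j m' W' = qubit_tensor t j (m * m') (W * W')"
proof (rule eq_matI)
  fix a b assume "a < dim_row (qubit_tensor t j (m * m') (W * W'))"
    "b < dim_col (qubit_tensor t j (m * m') (W * W'))"
  then have a: "a < 2^t" and b: "b < 2^t" by auto
  have "(qubit_tensor t j m W * qubit_tensor t j m' W') $$ (a, b) =
        (\<Sum>c<2^t. qubit_tensor t j m W $$ (a, c) * qubit_tensor t j m' W' $$ (c, b))"
    using a b by (simp add: scalar_prod_def atLeast0LessThan)
  also have "\<dots> = (\<Sum>v<2. \<Sum>d<2^(t-1).
      (m $$ (qbit t j a, v) * m' $$ (v, qbit t j b)) * (W $$ (qdel t j a, d) * W' $$ (d, qdel t j b)))"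
    unfolding sum_qubit_split[OF j]
  proof (intro sum.cong refl)
    fix v d :: nat assume "v \<in> {..<2}" "d \<in> {..<2^(t-1)}"
    then have "qins t j v d < 2^t" "qbit t j (qins t j v d) = v" "qdel t j (qins t j v d) = d"
      using qins_less[OF j] qbit_qins[OF j] qdel_qins[OF j] by auto
    then show "qubit_tensor t j m W $$ (a, qins t j v d) * qubit_tensor t j m' W' $$ (qins t j v d, b) =
        (m $$ (qbit t j a, v) * m' $$ (v, qbit t j b)) * (W $$ (qdel t j a, d) * W' $$ (d, qdel t j b))"
      using a b by (simp add: index_qubit_tensor)
  qed
  also have "\<dots> = (\<Sum>v<2. m $$ (qbit t j a, v) * m' $$ (v, qbit t j b)) *
                  (\<Sum>d<2^(t-1). W $$ (qdel t j a, d) * W' $$ (d, qdel t j b))"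
    by (simp add: sum_product)
  also have "\<dots> = qubit_tensor t j (m * m') (W * W') $$ (a, b)"
    using a b m W qdel_less[OF j a] qdel_less[OF j b]
    by (simp add: index_qubit_tensor scalar_prod_def atLeast0LessThan qbit_less_2)
  finally show "(qubit_tensor t j m W * qubit_tensor t j m' W') $$ (a, b) =
                qubit_tensor t j (m * m') (W * W') $$ (a, b)" .
qed auto

lemma mat_adjoint_qubit_tensor:
  assumes "j < t" "m \<in> carrier_mat 2 2" "W \<in> carrier_mat (2^(t-1)) (2^(t-1))"
  shows "mat_adjoint (qubit_tensor t j m W) = qubit_tensor t j (mat_adjoint m) (mat_adjoint W)"
  by (rule eq_matI) (use assms qdel_less[OF assms(1)] in \<open>auto simp: index_qubit_tensor qbit_less_2\<close>)

lemma smult_qubit_tensor: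
  assumes "j < t" "W \<in> carrier_mat (2^(t-1)) (2^(t-1))"
  shows "c \<cdot>\<^sub>m qubit_tensor t j m W = qubit_tensor t j m (c \<cdot>\<^sub>m W)"
  by (rule eq_matI) (use assms qdel_less[OF assms(1)] in \<open>auto simp: index_qubit_tensor\<close>)

lemma kron_kron_eq_qubit_tensor:
  assumes L: "L \<in> carrier_mat (2^j) (2^j)" and p: "p \<in> carrier_mat 2 2"
    and R: "R \<in> carrier_mat (2^k) (2^k)"
  shows "kron L (kron p R) = qubit_tensor (j + 1 + k) j p (kron L R)"
proof (rule eq_matI)
  define t where "t = j + 1 + k"
  define B :: nat where "B = 2^k"
  have j: "j < t" and k: "t - 1 - j = k" "t - Suc j = k" by (simp_all add: t_def)
  have dims: "(2::nat)^t = 2^j * (2 * B)" "(2::nat)^(t-1) = 2^j * B"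
    by (simp_all add: t_def B_def power_add)
  have qbit: "qbit t j x = x mod (2 * B) div B" for x
    using qbit_eq[OF j, of x] mod_mult2_eq[of x B 2] by (simp add: k B_def mult.commute)
  have qdel: "qdel t j x div B = x div (2 * B)" "qdel t j x mod B = x mod B" for x
    using qdel_eq[OF j, of x] by (simp_all add: k B_def)
  fix a b assume "a < dim_row (qubit_tensor t j p (kron L R))" "b < dim_col (qubit_tensor t j p (kron L R))"
  then have a: "a < 2^j * (2 * B)" and b: "b < 2^j * (2 * B)" using dims by simp_all
  have "kron L (kron p R) $$ (a, b) = L $$ (a div (2 * B), b div (2 * B)) *
      (p $$ (a mod (2 * B) div B, b mod (2 * B) div B) * R $$ (a mod B, b mod B))"
    using a b L p R mod_less_of_less_mult[OF a] mod_less_of_less_mult[OF b]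
    by (simp add: index_kron B_def mod_mod_cancel)
  also have "\<dots> = p $$ (qbit t j a, qbit t j b) * kron L R $$ (qdel t j a, qdel t j b)"
    using L p R qdel_less[OF j, of a] qdel_less[OF j, of b] a b dims
    by (simp add: index_kron B_def[symmetric] qbit qdel)
  finally show "kron L (kron p R) $$ (a, b) = qubit_tensor (j + 1 + k) j p (kron L R) $$ (a, b)"
    using a b dims by (simp add: index_qubit_tensor t_def)
next
  show "dim_row (kron L (kron p R)) = dim_row (qubit_tensor (j + 1 + k) j p (kron L R))"
    "dim_col (kron L (kron p R)) = dim_col (qubit_tensor (j + 1 + k) j p (kron L R))"
    using L p R by (simp_all add: power_add)
qed

lemma kron_list_eq_qubit_tensor:
  assumes "set ps \<subseteq> carrier_mat 2 2" "j < length ps"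
  shows "kron_list ps = qubit_tensor (length ps) j (ps ! j) (kron_list (take j ps @ drop (Suc j) ps))"
proof -
  have "kron_list ps = kron (kron_list (take j ps)) (kron (ps ! j) (kron_list (drop (Suc j) ps)))"
    using id_take_nth_drop[OF assms(2)] kron_list_append[of "take j ps"] by (metis kron_list_simps(2))
  also have "\<dots> = qubit_tensor (j + 1 + (length ps - Suc j)) j (ps ! j)
                     (kron (kron_list (take j ps)) (kron_list (drop (Suc j) ps)))"
    using assms kron_list_carrier_mat[of "take j ps"] kron_list_carrier_mat[of "drop (Suc j) ps"]
      set_take_subset[of j ps] set_drop_subset[of "Suc j" ps]
    by (intro kron_kron_eq_qubit_tensor) auto
  finally have "kron_list ps = qubit_tensor (j + 1 + (length ps - Suc j)) j (ps ! j)
                     (kron (kron_list (take j ps)) (kron_list (drop (Suc j) ps)))" .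
  moreover have "j + 1 + (length ps - Suc j) = length ps"
    using assms(2) by simp
  ultimately show ?thesis
    by (metis kron_list_append)
qed

lemma pauli_eq_qubit_tensor:
  assumes "pauli t P" "j < t"
  obtains p W where "p \<in> single_paulis" "W \<in> carrier_mat (2^(t-1)) (2^(t-1))"
    "P = qubit_tensor t j p W"
proof -
  obtain c ps where P: "length ps = t" "set ps \<subseteq> single_paulis" "P = c \<cdot>\<^sub>m kron_list ps"
    using assms(1) by (rule pauliE)
  define rest where "rest = take j ps @ drop (Suc j) ps"
  have rest: "set rest \<subseteq> carrier_mat 2 2" "length rest = t - 1"
    using P(1,2) assms(2) single_paulis_subset_carrier_mat set_take_subset[of j ps]
      set_drop_subset[of "Suc j" ps]
    by (auto simp: rest_def)
  have "P = qubit_tensor t j (ps ! j) (c \<cdot>\<^sub>m kron_list rest)"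
    using kron_list_eq_qubit_tensor[of ps j] P assms(2) single_paulis_subset_carrier_mat
      smult_qubit_tensor[OF assms(2) kron_list_carrier_mat[OF rest(1), unfolded rest(2)]]
    by (simp add: rest_def)
  moreover have "ps ! j \<in> single_paulis"
    using P(1,2) assms(2) by auto
  moreover have "c \<cdot>\<^sub>m kron_list rest \<in> carrier_mat (2^(t-1)) (2^(t-1))"
    using kron_list_carrier_mat[OF rest(1)] rest(2) by simp
  ultimately show ?thesis using that by blast
qed

section \<open>Support\<close>

lemma acts_trivially_iff_qubit_tensor:
  assumes j: "j < t" and A: "A \<in> carrier_mat (2^t) (2^t)"
  shows "acts_trivially t A j \<longleftrightarrow>
         (\<exists>W \<in> carrier_mat (2^(t-1)) (2^(t-1)). A = qubit_tensor t j (1\<^sub>m 2) W)"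
proof -
  have "A = qubit_tensor t j (1\<^sub>m 2) W \<longleftrightarrow> (\<forall>a < 2^t. \<forall>b < 2^t. A $$ (a, b) =
          (if qbit t j a = qbit t j b then W $$ (qdel t j a, qdel t j b) else 0))" for W
    using A qbit_less_2[of t j] by (auto simp: mat_eq_iff index_qubit_tensor)
  then show ?thesis
    unfolding acts_trivially_def by blast
qed

lemma acts_trivially_qubit_tensorE:
  assumes "j < t" "A \<in> carrier_mat (2^t) (2^t)" "acts_trivially t A j"
  obtains W where "W \<in> carrier_mat (2^(t-1)) (2^(t-1))" "A = qubit_tensor t j (1\<^sub>m 2) W"
  using assms acts_trivially_iff_qubit_tensor by blast

lemma acts_trivially_mult:
  assumes j: "j < t" and A: "A \<in> carrier_mat (2^t) (2^t)" and B: "B \<in> carrier_mat (2^t) (2^t)"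
    and "acts_trivially t A j" "acts_trivially t B j"
  shows "acts_trivially t (A * B) j"
proof -
  obtain V W where V: "V \<in> carrier_mat (2^(t-1)) (2^(t-1))" "A = qubit_tensor t j (1\<^sub>m 2) V"
    and W: "W \<in> carrier_mat (2^(t-1)) (2^(t-1))" "B = qubit_tensor t j (1\<^sub>m 2) W"
    using assms by (metis acts_trivially_qubit_tensorE)
  have "A * B = qubit_tensor t j (1\<^sub>m 2) (V * W)"
    using qubit_tensor_mult[OF j one_carrier_mat one_carrier_mat V(1) W(1)] V(2) W(2) by simp
  then show ?thesis
    using acts_trivially_iff_qubit_tensor[OF j] A B V(1) W(1) by auto
qed

lemma acts_trivially_mat_adjoint:
  assumes j: "j < t" and A: "A \<in> carrier_mat (2^t) (2^t)" and "acts_trivially t A j"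
  shows "acts_trivially t (mat_adjoint A) j"
proof -
  obtain W where W: "W \<in> carrier_mat (2^(t-1)) (2^(t-1))" "A = qubit_tensor t j (1\<^sub>m 2) W"
    using assms by (rule acts_trivially_qubit_tensorE)
  have "mat_adjoint A = qubit_tensor t j (1\<^sub>m 2) (mat_adjoint W)"
    using mat_adjoint_qubit_tensor[OF j one_carrier_mat W(1)] W(2) by simp
  then show ?thesis
    using acts_trivially_iff_qubit_tensor[OF j] A W(1) by auto
qed

lemma acts_trivially_pauli_conj:
  assumes j: "j < t" and P: "pauli t P" and A: "A \<in> carrier_mat (2^t) (2^t)"
    and "acts_trivially t A j"
  shows "acts_trivially t (P * A * mat_adjoint P) j"
proof -
  obtain p W where p: "p \<in> single_paulis" and W: "W \<in> carrier_mat (2^(t-1)) (2^(t-1))"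
    and P_eq: "P = qubit_tensor t j p W"
    using P j by (rule pauli_eq_qubit_tensor)
  obtain V where V: "V \<in> carrier_mat (2^(t-1)) (2^(t-1))" "A = qubit_tensor t j (1\<^sub>m 2) V"
    using j A assms(4) by (rule acts_trivially_qubit_tensorE)
  have p2: "p \<in> carrier_mat 2 2" using p by (rule single_pauli_carrier_mat)
  have "P * A * mat_adjoint P = qubit_tensor t j (p * 1\<^sub>m 2 * mat_adjoint p) (W * V * mat_adjoint W)"
    using p2 W V(1)
    by (simp add: P_eq V(2) mat_adjoint_qubit_tensor qubit_tensor_mult j)
  also have "p * 1\<^sub>m 2 * mat_adjoint p = 1\<^sub>m 2"
    using p2 by (simp add: single_pauli_mat_adjoint[OF p] single_pauli_square[OF p])
  finally show ?thesis
    using acts_trivially_iff_qubit_tensor[OF j] A P W V(1) pauli_carrier_mat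
    by (metis mat_adjoint_carrier_mat mult_carrier_mat)
qed

lemma Supp_mult_subset:
  "A \<in> carrier_mat (2^t) (2^t) \<Longrightarrow> B \<in> carrier_mat (2^t) (2^t) \<Longrightarrow>
   Supp t (A * B) \<subseteq> Supp t A \<union> Supp t B"
  unfolding Supp_def using acts_trivially_mult by blast

lemma Supp_mat_adjoint_subset:
  "A \<in> carrier_mat (2^t) (2^t) \<Longrightarrow> Supp t (mat_adjoint A) \<subseteq> Supp t A"
  unfolding Supp_def using acts_trivially_mat_adjoint by blast

lemma Supp_pauli_conj_subset:
  "pauli t P \<Longrightarrow> A \<in> carrier_mat (2^t) (2^t) \<Longrightarrow> Supp t (P * A * mat_adjoint P) \<subseteq> Supp t A"
  unfolding Supp_def using acts_trivially_pauli_conj by blast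

section \<open>Controlled operators and the commutator\<close>

lemma ctrl_mult_idtensor:
  assumes "A \<in> carrier_mat (2^t) (2^t)" "B \<in> carrier_mat (2^t) (2^t)"
  shows "ctrl t A * idtensor t B = four_block_mat B (0\<^sub>m (2^t) (2^t)) (0\<^sub>m (2^t) (2^t)) (A * B)"
  unfolding ctrl_def idtensor_def
  by (subst mult_four_block_mat[OF one_carrier_mat zero_carrier_mat zero_carrier_mat assms(1)
        assms(2) zero_carrier_mat zero_carrier_mat assms(2)]) (use assms in auto)

lemma block_diag_mult_ctrl:
  assumes "A \<in> carrier_mat (2^t) (2^t)" "B \<in> carrier_mat (2^t) (2^t)" "D \<in> carrier_mat (2^t) (2^t)"
  shows "four_block_mat B (0\<^sub>m (2^t) (2^t)) (0\<^sub>m (2^t) (2^t)) D * ctrl t A =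
         four_block_mat B (0\<^sub>m (2^t) (2^t)) (0\<^sub>m (2^t) (2^t)) (D * A)"
  unfolding ctrl_def
  by (subst mult_four_block_mat[OF assms(2) zero_carrier_mat zero_carrier_mat assms(3)
        one_carrier_mat zero_carrier_mat zero_carrier_mat assms(1)]) (use assms in auto)

lemma ctrl_mult_idtensor_eq:
  assumes "P \<in> carrier_mat (2^t) (2^t)" "Q \<in> carrier_mat (2^t) (2^t)" "C \<in> carrier_mat (2^t) (2^t)"
    and "Q * C * P = P * C"
  shows "ctrl t P * idtensor t C = ctrl t Q * idtensor t C * ctrl t P"
  using assms by (simp add: ctrl_mult_idtensor block_diag_mult_ctrl)

definition group_commutator :: "complex mat \<Rightarrow> complex mat \<Rightarrow> complex mat" where
  "group_commutator A B = A * B * mat_adjoint A * mat_adjoint B"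

lemma group_commutator_mult_eq:
  assumes A: "unitary_op t A" and B: "unitary_op t B"
  shows "group_commutator A B * B * A = A * B"
proof -
  have carrier: "A \<in> carrier_mat (2^t) (2^t)" "B \<in> carrier_mat (2^t) (2^t)"
    using A B by (auto simp: unitary_op_def)
  then show ?thesis
    unfolding group_commutator_def
    by (simp add: assoc_mult_mat[of _ "2^t" "2^t" _ "2^t" _ "2^t"] mult_carrier_mat[of _ "2^t" "2^t" _ "2^t"]
        unitary_op_cancel[OF B] unitary_op_mat_adjoint_mult[OF A])
qed

lemma pauli_group_commutator:
  assumes "clifford t C" "pauli t P"
  shows "pauli t (group_commutator P C)"
proof -
  have "pauli t (C * mat_adjoint P * mat_adjoint C)"
    using assms pauli_mat_adjoint(1) unfolding clifford_def by blast
  then have "pauli t (P * (C * mat_adjoint P * mat_adjoint C))"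
    using assms(2) by (rule pauli_mult[rotated])
  moreover have "C \<in> carrier_mat (2^t) (2^t)" "P \<in> carrier_mat (2^t) (2^t)"
    using assms by (auto simp: clifford_def unitary_op_def pauli_carrier_mat)
  ultimately show ?thesis
    unfolding group_commutator_def by (simp add: assoc_mult_mat[of _ "2^t" "2^t" _ "2^t" _ "2^t"])
qed

lemma Supp_group_commutator_subset:
  assumes "pauli t P" "C \<in> carrier_mat (2^t) (2^t)"
  shows "Supp t (group_commutator P C) \<subseteq> Supp t C"
proof -
  have P: "P \<in> carrier_mat (2^t) (2^t)" using assms(1) by (rule pauli_carrier_mat)
  have "Supp t (group_commutator P C) \<subseteq> Supp t (P * C * mat_adjoint P) \<union> Supp t (mat_adjoint C)"
    unfolding group_commutator_def using P assms(2) by (intro Supp_mult_subset) auto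
  also have "\<dots> \<subseteq> Supp t C"
    using Supp_pauli_conj_subset[OF assms] Supp_mat_adjoint_subset[OF assms(2)] by blast
  finally show ?thesis .
qed

lemma clifford_adjoint_conj_sign:
  assumes C: "clifford t C" and sq: "pauli t (C * C)" and P: "pauli t P"
  shows "\<exists>s\<in>{1, -1}. mat_adjoint C * P * C = s \<cdot>\<^sub>m (C * P * mat_adjoint C)"
proof -
  define S R where "S = C * C" and "R = C * P * mat_adjoint C"
  have U: "unitary_op t C" and R: "pauli t R"
    using C P by (auto simp: clifford_def R_def)
  have carrier: "C \<in> carrier_mat (2^t) (2^t)" "P \<in> carrier_mat (2^t) (2^t)"
      "R \<in> carrier_mat (2^t) (2^t)" "S \<in> carrier_mat (2^t) (2^t)"
    using U P R sq by (auto simp: unitary_op_def pauli_carrier_mat S_def)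
  note assoc = assoc_mult_mat[of _ "2^t" "2^t" _ "2^t" _ "2^t"]
    and mult_carrier = mult_carrier_mat[of _ "2^t" "2^t" _ "2^t"]
  obtain s where s: "s \<in> {1, -1}" "R * S = s \<cdot>\<^sub>m (S * R)"
    using paulis_commute_or_anticommute[OF R sq] unfolding S_def by blast
  have "mat_adjoint C * P * C = mat_adjoint S * (R * S)"
    using carrier(1,2)
    by (simp add: S_def R_def mat_adjoint_mult assoc mult_carrier unitary_op_cancel[OF U, where m = "2^t"])
  also have "\<dots> = s \<cdot>\<^sub>m (mat_adjoint S * (S * R))"
    using carrier by (simp add: s(2) mult_smult_distrib[of _ "2^t" "2^t" _ "2^t"] mult_carrier)
  also have "mat_adjoint S * (S * R) = R"
    using pauli_unitary_op[OF sq] carrier(3) unfolding S_def by (rule unitary_op_cancel)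
  finally show ?thesis
    using s(1) unfolding R_def by blast
qed

lemma group_commutator_commutes_or_anticommutes:
  assumes C: "clifford t C" and sq: "pauli t (C * C)" and P: "pauli t P"
  defines "Q \<equiv> group_commutator P C"
  shows "Q * C = C * Q \<or> Q * C = - (C * Q)"
proof -
  have U: "unitary_op t C"
    using C by (simp add: clifford_def)
  have carrier: "C \<in> carrier_mat (2^t) (2^t)" "P \<in> carrier_mat (2^t) (2^t)"
    using U P by (auto simp: unitary_op_def pauli_carrier_mat)
  note assoc = assoc_mult_mat[of _ "2^t" "2^t" _ "2^t" _ "2^t"]
    and mult_carrier = mult_carrier_mat[of _ "2^t" "2^t" _ "2^t"]
    and adj_mult = mat_adjoint_mult[of _ "2^t" "2^t" _ "2^t"]
  obtain s where s: "s \<in> {1, -1}" "mat_adjoint C * P * C = s \<cdot>\<^sub>m (C * P * mat_adjoint C)"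
    using clifford_adjoint_conj_sign[OF C sq P] by blast
  obtain s' where s': "s' \<in> {1, -1}" "mat_adjoint Q = s' \<cdot>\<^sub>m Q"
    using pauli_mat_adjoint(2)[OF pauli_group_commutator[OF C P]] unfolding Q_def by blast
  have Q: "Q \<in> carrier_mat (2^t) (2^t)"
    using carrier by (simp add: Q_def group_commutator_def mult_carrier)
  have "mat_adjoint C * (Q * C) = (mat_adjoint C * P * C) * mat_adjoint P"
    using carrier
    by (simp add: Q_def group_commutator_def assoc mult_carrier unitary_op_mat_adjoint_mult[OF U])
  also have "\<dots> = s \<cdot>\<^sub>m mat_adjoint Q"
    using carrier
    by (simp add: s(2) Q_def group_commutator_def adj_mult assoc mult_carrier
        mult_smult_assoc_mat[of _ "2^t" "2^t" _ "2^t"])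
  finally have "Q * C = C * ((s * s') \<cdot>\<^sub>m Q)"
    using unitary_op_cancel(1)[OF U, of "Q * C" "2^t"] carrier Q
    by (simp add: s'(2) smult_smult_mat mult_carrier)
  then have "Q * C = (s * s') \<cdot>\<^sub>m (C * Q)"
    using carrier Q by (simp add: mult_smult_distrib[of _ "2^t" "2^t" _ "2^t"])
  moreover have "s * s' \<in> {1, -1}"
    using s(1) s'(1) by auto
  ultimately show ?thesis
    using sign_smult_cases by blast
qed

theorem proposition3:
  fixes t :: nat and C P :: "complex mat"
  assumes "psc t C" and "pauli t P"
  shows "\<exists>Q. pauli t Q \<and>
           ctrl t P * idtensor t C = ctrl t Q * idtensor t C * ctrl t P \<and>
           (Q * C = C * Q \<or> Q * C = - (C * Q)) \<and>
           Supp t Q \<subseteq> Supp t C"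
proof -
  have C: "clifford t C" and sq: "pauli t (C * C)"
    using assms(1) by (auto simp: psc_def)
  then have U: "unitary_op t C"
    by (simp add: clifford_def)
  define Q where "Q = group_commutator P C"
  have "pauli t Q"
    unfolding Q_def using C assms(2) by (rule pauli_group_commutator)
  moreover have "ctrl t P * idtensor t C = ctrl t Q * idtensor t C * ctrl t P"
    using group_commutator_mult_eq[OF pauli_unitary_op[OF assms(2)] U] \<open>pauli t Q\<close> U assms(2)
    by (intro ctrl_mult_idtensor_eq) (auto simp: Q_def pauli_carrier_mat unitary_op_def)
  moreover have "Q * C = C * Q \<or> Q * C = - (C * Q)"
    unfolding Q_def using C sq assms(2) by (rule group_commutator_commutes_or_anticommutes)
  moreover have "Supp t Q \<subseteq> Supp t C"
    unfolding Q_def using assms(2) U by (intro Supp_group_commutator_subset) (auto simp: unitary_op_def)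
  ultimately show ?thesis
    by blast
qed

end
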